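(* Fix $x_0$, $\tau\in(0,1)$, $v\in B(0,\rho_{\max})$. There exist a finite positive constant $\beta_1'(x_0)$ and, for each $i\in\{2,\dots,T\}$, a finite set $\mathcal{L}_i'$ of sequences of non-negative integers of length $i-1$ and finite positive constants $\beta_i'^{(j_1,\dots,j_{i-1})}(x_0)$, not depending on $\epsilon$, the control or the observations, such that for every nominal control $u\in U$ left continuous at $\tau$ (with nominal trajectory $x$), every $(y_1,\dots,y_T)$ and every $\epsilon\in[0,\tau]$: $$|c(x_1^\epsilon(t),u^\epsilon(t))-c(x_1(t),u(t))|\le\epsilon\,\beta_1'(x_0)\quad\forall t\in(\tau,1],$$ and for all $i\in\{2,\dots,T\}$ and $t\in[i-1,i]$, $$|c(x_i^\epsilon(t),u^\epsilon(t))-c(x_i(t),u(t))|\le\epsilon\sum_{(j_1,\dots,j_{i-1})\in\mathcal{L}_i'}\beta_i'^{(j_1,\dots,j_{i-1})}(x_0)\prod_{m=1}^{i-1}\|y_m\|_2^{j_m}.$$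
   Context: Fix positive integers $T,m,n_x,n_y$ and $\rho_{\max}\in(0,\infty)$; $B(0,\rho_{\max})$ is the closed Euclidean ball of radius $\rho_{\max}$ in $\mathbb{R}^m$; $U$ is the set of piecewise continuous $u:[0,T]\to\mathbb{R}^m$ with $\|u(t)\|_2\le\rho_{\max}$ for all $t$. $f:\mathbb{R}^{n_x}\times\mathbb{R}^m\to\mathbb{R}^{n_x}$ is continuously differentiable and there is $K_1\in[1,\infty)$ with $\|f(x',u')-f(x'',u'')\|_2\le K_1(\|x'-x''\|_2+\|u'-u''\|_2)$ for all $x',x''$ and $u',u''\in B(0,\rho_{\max})$. $g:\mathbb{R}^{n_x}\times\mathbb{R}^{n_y}\to\mathbb{R}^{n_x}$ is continuous and differentiable in its first argument, and there are $K_2,\dots,K_5\ge0$ and positive integers $L_1,L_2$ such that for all $x,y$ both $\|g(x,y)\|_2$ and $\|\frac{\partial}{\partial x}g(x,y)\|_2$ are at most $K_2+K_3\|x\|_2^{L_1}+K_4\|y\|_2^{L_2}+K_5\|x\|_2^{L_1}\|y\|_2^{L_2}$. For a control $w\in U$ the hybrid trajectory from $x_0$ is: $x_1$ on $[0,1]$ solves $\dot x_1=f(x_1,w)$, $x_1(0)=x_0$; for $i=2,\dots,T$, $x_i$ on $[i-1,i]$ solves $\dot x_i=f(x_i,w)$ with $x_i(i-1)=g(x_{i-1}(i-1),y_{i-1})$. Perturbed control: for $\epsilon\in[0,\tau]$, $u^\epsilon(t)=v$ if $t\in(\tau-\epsilon,\tau]$ and $u^\epsilon(t)=u(t)$ otherwise;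 $x_i^\epsilon$ are the modes of the trajectory under $u^\epsilon$, and $x_i=x_i^0$. Costs: $c:\mathbb{R}^{n_x}\times\mathbb{R}^m\to\mathbb{R}$ is continuous and continuously differentiable in $x$, and there are $K_6,K_7\ge0$ and a positive integer $L_3$ such that $|c(x,u)|$ and $\|\frac{\partial}{\partial x}c(x,u)\|_2$ are at most $K_6+K_7\|x\|_2^{L_3}$ for all $x$ and $u\in B(0,\rho_{\max})$. *)

theory Defs
  imports "HOL-Analysis.Analysis"
begin

definition piecewise_continuous_on :: "real \<Rightarrow> (real \<Rightarrow> 'a::real_normed_vector) \<Rightarrow> bool" where
  "piecewise_continuous_on T u \<longleftrightarrow>
     (\<exists>S. finite S \<and> S \<subseteq> {0..T} \<and> continuous_on ({0..T} - S) u \<and>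
        (\<forall>s\<in>S. (\<exists>l. (u \<longlongrightarrow> l) (at s within {0..<s})) \<and>
                 (\<exists>l. (u \<longlongrightarrow> l) (at s within {s<..T}))))"

definition admissible_controls :: "real \<Rightarrow> real \<Rightarrow> (real \<Rightarrow> real^'m) set" where
  "admissible_controls T \<rho> =
     {u. piecewise_continuous_on T u \<and> (\<forall>t\<in>{0..T}. norm (u t) \<le> \<rho>)}"

definition ode_solution ::
  "('x::euclidean_space \<Rightarrow> 'u \<Rightarrow> 'x) \<Rightarrow> (real \<Rightarrow> 'u) \<Rightarrow> real \<Rightarrow> real \<Rightarrow> 'x \<Rightarrow> (real \<Rightarrow> 'x) \<Rightarrow> bool" where
  "ode_solution f w a b x0 x \<longleftrightarrow>
     continuous_on {a..b} x \<and> x a = x0 \<and>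
     (\<forall>t\<in>{a..b}. ((\<lambda>s. f (x s) (w s)) has_integral (x t - x0)) {a..t})"

definition hybrid_trajectory ::
  "('x::euclidean_space \<Rightarrow> 'u \<Rightarrow> 'x) \<Rightarrow> ('x \<Rightarrow> 'y \<Rightarrow> 'x) \<Rightarrow> nat \<Rightarrow> (real \<Rightarrow> 'u) \<Rightarrow> 'x
     \<Rightarrow> (nat \<Rightarrow> 'y) \<Rightarrow> (nat \<Rightarrow> real \<Rightarrow> 'x) \<Rightarrow> bool" where
  "hybrid_trajectory f g T w x0 y xs \<longleftrightarrow>
     ode_solution f w 0 1 x0 (xs 1) \<and>
     (\<forall>i\<in>{2..T}. ode_solution f w (real i - 1) (real i)
                    (g (xs (i - 1) (real i - 1)) (y (i - 1))) (xs i))"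

definition needle :: "(real \<Rightarrow> 'u) \<Rightarrow> real \<Rightarrow> 'u \<Rightarrow> real \<Rightarrow> real \<Rightarrow> 'u" where
  "needle u \<tau> v \<epsilon> t = (if \<tau> - \<epsilon> < t \<and> t \<le> \<tau> then v else u t)"

end

(*
  Each mode solves an ODE with a Lipschitz right-hand side on an interval of length one, so by
  Gronwall's inequality a solution is bounded by exp K1 times (norm of its initial value + a
  constant), and two solutions differ by at most exp K1 times (initial distance + K1 times the
  integral of the control difference).  The needle changes the control only on [tau - eps, tau],
  inside the first mode, which gives a gap of order eps there.  Later modes inherit the gap through
  the jump map g, whose derivative grows polynomially, so by induction on the mode both the norm of
  the trajectories and the gap are bounded by constants times powers of the weight
  prod_m (1 + norm y_m).  The mean value theorem for the cost and the binomial expansion of each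
  factor of the weight's power give the stated sum.
*)
theory Submission
  imports Defs
begin

lemma gronwall_inequality:
  fixes \<phi> :: "real \<Rightarrow> real"
  assumes cont: "continuous_on {a..b} \<phi>" and K: "0 \<le> K"
    and le: "\<And>s. s \<in> {a..b} \<Longrightarrow> \<phi> s \<le> A + K * integral {a..s} \<phi>"
    and t: "t \<in> {a..b}"
  shows "\<phi> t \<le> A * exp (K * (t - a))"
proof -
  define \<Psi> where "\<Psi> s = A + K * integral {a..s} \<phi>" for s
  define h where "h s = exp (- (K * (s - a))) * \<Psi> s" for s
  have dh: "(h has_real_derivative exp (- (K * (s - a))) * K * (\<phi> s - \<Psi> s)) (at s within {a..b})"
    if "s \<in> {a..b}" for s
    unfolding h_def \<Psi>_def
    by (auto intro!: derivative_eq_intros integral_has_real_derivative[OF cont that]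
        simp: algebra_simps)
  have "h t \<le> h a"
  proof (rule DERIV_nonpos_imp_decreasing_open[of a t h])
    show "a \<le> t" using t by auto
    show "continuous_on {a..t} h"
      using DERIV_continuous_on[OF dh] t by (auto elim: continuous_on_subset)
    fix s assume s: "a < s" "s < t"
    then have "at s within {a..b} = at s" using t by (simp add: at_within_Icc_at)
    then have "DERIV h s :> exp (- (K * (s - a))) * K * (\<phi> s - \<Psi> s)"
      using dh[of s] s t by simp
    moreover have "\<phi> s - \<Psi> s \<le> 0" using le[of s] s t by (simp add: \<Psi>_def)
    ultimately show "\<exists>y. DERIV h s :> y \<and> y \<le> 0"
      using K by (intro exI conjI) (auto intro: mult_nonneg_nonpos)
  qed
  then have "exp (- (K * (t - a))) * \<Psi> t \<le> A" by (simp add: h_def \<Psi>_def)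
  then have "exp (K * (t - a)) * (exp (- (K * (t - a))) * \<Psi> t) \<le> exp (K * (t - a)) * A"
    by (intro mult_left_mono) auto
  then have "\<Psi> t \<le> exp (K * (t - a)) * A"
    by (simp add: mult.assoc[symmetric] exp_minus_inverse)
  then show ?thesis using le[OF t] by (simp add: \<Psi>_def mult.commute)
qed

lemma integral_equation_norm_le:
  fixes X F :: "real \<Rightarrow> 'a::euclidean_space"
  assumes X: "continuous_on {a..b} X"
    and F: "\<And>s. s \<in> {a..b} \<Longrightarrow> (F has_integral (X s - X a)) {a..s}"
    and F_le: "\<And>s. s \<in> {a..b} \<Longrightarrow> norm (F s) \<le> K * norm (X s) + h s"
    and h: "h integrable_on {a..b}" "\<And>s. s \<in> {a..b} \<Longrightarrow> 0 \<le> h s"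
    and K: "0 \<le> K" and t: "t \<in> {a..b}"
  shows "norm (X t) \<le> (norm (X a) + integral {a..b} h) * exp (K * (t - a))"
proof (rule gronwall_inequality[where \<phi> = "\<lambda>s. norm (X s)", OF _ K _ t])
  show "continuous_on {a..b} (\<lambda>s. norm (X s))"
    using X by (rule continuous_on_norm)
  fix s assume s: "s \<in> {a..b}"
  then have sub: "{a..s} \<subseteq> {a..b}" by auto
  have X_int: "(\<lambda>r. norm (X r)) integrable_on {a..s}"
    by (intro integrable_continuous_interval continuous_on_norm continuous_on_subset[OF X sub])
  have h_int: "h integrable_on {a..s}"
    using h(1) sub by (rule integrable_on_subinterval)
  have "norm (integral {a..s} F) \<le> integral {a..s} (\<lambda>r. K * norm (X r) + h r)"
    using F_le sub
    by (intro integral_norm_bound_integral has_integral_integrable[OF F[OF s]]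
        integrable_add integrable_on_mult_right X_int h_int) auto
  then have "norm (X s - X a) \<le> integral {a..s} (\<lambda>r. K * norm (X r) + h r)"
    using integral_unique[OF F[OF s]] by simp
  also have "\<dots> = K * integral {a..s} (\<lambda>r. norm (X r)) + integral {a..s} h"
    using X_int h_int by (simp add: integral_add integrable_on_mult_right)
  also have "integral {a..s} h \<le> integral {a..b} h"
    using h h_int sub by (intro integral_subset_le) auto
  finally show "norm (X s) \<le> norm (X a) + integral {a..b} h + K * integral {a..s} (\<lambda>r. norm (X r))"
    using norm_triangle_ineq2[of "X s" "X a"] by linarith
qed

lemma norm_diff_le_derivative_bound:
  fixes F :: "'a::real_normed_vector \<Rightarrow> 'b::real_normed_vector"
  assumes "\<And>z. (F has_derivative blinfun_apply (DF z)) (at z)"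
    and "\<And>z. norm z \<le> R \<Longrightarrow> norm (DF z) \<le> B"
    and "norm x \<le> R" "norm x' \<le> R"
  shows "norm (F x - F x') \<le> B * norm (x - x')"
  using assms
  by (intro differentiable_bound[of "cball 0 R" F "\<lambda>z. blinfun_apply (DF z)"])
     (auto intro: has_derivative_at_withinI simp: norm_blinfun.rep_eq[symmetric])

lemma polynomial_le_one_plus_powers:
  fixes r a :: real
  assumes "0 \<le> K2" "0 \<le> K3" "0 \<le> K4" "0 \<le> K5" "0 \<le> r" "0 \<le> a"
  shows "K2 + K3 * r ^ L1 + K4 * a ^ L2 + K5 * r ^ L1 * a ^ L2
    \<le> (K2 + K3 + K4 + K5) * (1 + r) ^ L1 * (1 + a) ^ L2"
proof -
  define P Q where "P = (1 + r) ^ L1" and "Q = (1 + a) ^ L2"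
  have P: "1 \<le> P" "r ^ L1 \<le> P" and Q: "1 \<le> Q" "a ^ L2 \<le> Q"
    using assms by (auto simp: P_def Q_def intro: power_mono one_le_power)
  have "P \<le> P * Q" "Q \<le> P * Q"
    using P Q mult_left_mono[of 1 Q P] mult_right_mono[of 1 P Q] by simp_all
  moreover have "r ^ L1 * a ^ L2 \<le> P * Q"
    using P Q assms by (intro mult_mono) auto
  ultimately have "1 \<le> P * Q" "r ^ L1 \<le> P * Q" "a ^ L2 \<le> P * Q" "r ^ L1 * a ^ L2 \<le> P * Q"
    using P Q by linarith+
  then have "K2 * 1 + K3 * r ^ L1 + K4 * a ^ L2 + K5 * (r ^ L1 * a ^ L2)
      \<le> K2 * (P * Q) + K3 * (P * Q) + K4 * (P * Q) + K5 * (P * Q)"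
    using assms by (intro add_mono mult_left_mono) auto
  then show ?thesis by (simp add: P_def Q_def algebra_simps)
qed

lemma one_plus_power_le_weight_power:
  fixes r C W :: real
  assumes "0 \<le> r" "r \<le> C * W ^ E" "1 \<le> W"
  shows "(1 + r) ^ L \<le> (1 + C) ^ L * W ^ (E * L)"
proof -
  have "1 + r \<le> W ^ E + C * W ^ E"
    using assms one_le_power[of W E] by linarith
  then have "(1 + r) ^ L \<le> ((1 + C) * W ^ E) ^ L"
    using assms by (intro power_mono) (auto simp: algebra_simps)
  then show ?thesis by (simp add: power_mult_distrib power_mult mult.commute)
qed

lemma growth_le_weight_power:
  fixes r a C W K :: real
  assumes K: "0 \<le> K" and r: "0 \<le> r" "r \<le> C * W ^ E" and W: "1 \<le> W" and a: "0 \<le> a"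
  shows "K * (1 + r) ^ L1 * (1 + a) ^ L2 \<le> K * (1 + C) ^ L1 * (W * (1 + a)) ^ (E * L1 + L2)"
proof -
  have "0 \<le> C * W ^ E" "0 < W ^ E" using r W by auto
  then have C: "0 \<le> C" by (auto simp: zero_le_mult_iff)
  have "W \<le> W * (1 + a)" "1 + a \<le> W * (1 + a)"
    using W a mult_left_mono[of 1 "1 + a" W] mult_right_mono[of 1 W "1 + a"] by simp_all
  then have W_le: "(1 + C) ^ L1 * W ^ (E * L1) \<le> (1 + C) ^ L1 * (W * (1 + a)) ^ (E * L1)"
    and a_le: "(1 + a) ^ L2 \<le> (W * (1 + a)) ^ L2"
    using W a C by (auto intro!: mult_left_mono power_mono)
  have "(1 + r) ^ L1 \<le> (1 + C) ^ L1 * (W * (1 + a)) ^ (E * L1)"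
    using one_plus_power_le_weight_power[OF r W] W_le by (rule order_trans)
  then have "(1 + r) ^ L1 * (1 + a) ^ L2 \<le> (1 + C) ^ L1 * (W * (1 + a)) ^ (E * L1) * (W * (1 + a)) ^ L2"
    using a_le r a W C by (intro mult_mono) auto
  then show ?thesis
    using K by (simp add: mult.assoc power_add mult_left_mono)
qed

definition exponent_lists :: "nat \<Rightarrow> nat \<Rightarrow> nat list set" where
  "exponent_lists n D = {js. set js \<subseteq> {..D} \<and> length js = n}"

lemma finite_exponent_lists: "finite (exponent_lists n D)"
  unfolding exponent_lists_def by (rule finite_lists_length_eq) simp

lemma prod_sum_eq_sum_exponent_lists:
  fixes F :: "nat \<Rightarrow> nat \<Rightarrow> 'a::comm_semiring_1"
  shows "(\<Prod>m<n. \<Sum>k\<le>D. F m k) = (\<Sum>js\<in>exponent_lists n D. \<Prod>m<n. F m (js ! m))"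
proof -
  have "(\<Prod>m<n. \<Sum>k\<le>D. F m k) = (\<Sum>g\<in>PiE {..<n} (\<lambda>_. {..D}). \<Prod>m<n. F m (g m))"
    by (rule prod_sum_PiE) auto
  also have "\<dots> = (\<Sum>js\<in>exponent_lists n D. \<Prod>m<n. F m (js ! m))"
    by (rule sum.reindex_bij_witness[of _ "\<lambda>js. restrict (nth js) {..<n}" "\<lambda>g. map g [0..<n]"])
       (auto simp: exponent_lists_def PiE_def extensional_def list_eq_iff_nth_eq set_conv_nth
         intro!: prod.cong)
  finally show ?thesis .
qed

lemma prod_one_plus_power_eq_sum_exponent_lists:
  fixes a :: "nat \<Rightarrow> 'a::comm_semiring_1"
  shows "(\<Prod>m<n. 1 + a m) ^ E
    = (\<Sum>js\<in>exponent_lists n E. (\<Prod>m<n. of_nat (E choose js ! m)) * (\<Prod>m<n. a m ^ (js ! m)))"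
proof -
  have "(1 + a m) ^ E = (\<Sum>k\<le>E. of_nat (E choose k) * a m ^ k)" for m
    using binomial_ring[of "a m" 1 E] by (simp add: add.commute)
  then have "(\<Prod>m<n. 1 + a m) ^ E = (\<Prod>m<n. \<Sum>k\<le>E. of_nat (E choose k) * a m ^ k)"
    by (simp add: prod_power_distrib)
  then show ?thesis
    by (simp add: prod_sum_eq_sum_exponent_lists prod.distrib)
qed

definition obs_weight :: "(nat \<Rightarrow> 'a::real_normed_vector) \<Rightarrow> nat \<Rightarrow> real" where
  "obs_weight y n = (\<Prod>m<n. 1 + norm (y (Suc m)))"

lemma obs_weight_0 [simp]: "obs_weight y 0 = 1"
  by (simp add: obs_weight_def)

lemma obs_weight_Suc: "obs_weight y (Suc n) = obs_weight y n * (1 + norm (y (Suc n)))"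
  by (simp add: obs_weight_def)

lemma obs_weight_ge_1: "1 \<le> obs_weight y n"
  unfolding obs_weight_def by (intro prod_ge_1) auto

lemma obs_weight_le_Suc: "obs_weight y n \<le> obs_weight y (Suc n)"
  using mult_left_mono[of 1 "1 + norm (y (Suc n))" "obs_weight y n"] obs_weight_ge_1[of y n]
  by (simp add: obs_weight_Suc)

lemma obs_weight_power_eq_sum_exponent_lists:
  "obs_weight y n ^ E = (\<Sum>js\<in>exponent_lists n E.
    (\<Prod>m<n. of_nat (E choose js ! m)) * (\<Prod>m<n. norm (y (m + 1)) ^ (js ! m)))"
  by (simp add: obs_weight_def prod_one_plus_power_eq_sum_exponent_lists)

lemma prod_binomial_exponent_lists_pos:
  assumes "js \<in> exponent_lists n E"
  shows "0 < (\<Prod>m<n. of_nat (E choose js ! m) :: 'a::linordered_semidom)"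
proof (rule prod_pos)
  fix m assume "m \<in> {..<n}"
  with assms have "js ! m \<in> set js" by (simp add: exponent_lists_def)
  with assms show "0 < (of_nat (E choose js ! m) :: 'a)" by (auto simp: exponent_lists_def)
qed

lemma hybrid_trajectory_first_mode:
  "hybrid_trajectory f g T w x0 y xs \<Longrightarrow> ode_solution f w 0 1 x0 (xs 1)"
  by (simp add: hybrid_trajectory_def)

lemma hybrid_trajectory_next_mode:
  assumes "hybrid_trajectory f g T w x0 y xs" "Suc (Suc n) \<le> T"
  shows "ode_solution f w (real (Suc n)) (real (Suc (Suc n)))
    (g (xs (Suc n) (real (Suc n))) (y (Suc n))) (xs (Suc (Suc n)))"
proof -
  have "Suc (Suc n) \<in> {2..T}" and "real (Suc (Suc n)) - 1 = real (Suc n)"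
    using assms(2) by simp_all
  with assms(1) show ?thesis
    unfolding hybrid_trajectory_def by (metis diff_Suc_1)
qed

locale hybrid_system =
  fixes f :: "'x::euclidean_space \<Rightarrow> 'u::real_normed_vector \<Rightarrow> 'x" and \<rho> K1 :: real
    and g :: "'x \<Rightarrow> 'y::real_normed_vector \<Rightarrow> 'x" and Dg :: "'x \<Rightarrow> 'y \<Rightarrow> 'x \<Rightarrow>\<^sub>L 'x"
    and Kg :: real and L1 L2 :: nat
    and c :: "'x \<Rightarrow> 'u \<Rightarrow> real" and Dc :: "'x \<Rightarrow> 'u \<Rightarrow> 'x \<Rightarrow>\<^sub>L real"
    and Kc :: real and L3 :: nat
  assumes f_lipschitz: "\<And>x' x'' u' u''. norm u' \<le> \<rho> \<Longrightarrow> norm u'' \<le> \<rho> \<Longrightarrow>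
      norm (f x' u' - f x'' u'') \<le> K1 * (norm (x' - x'') + norm (u' - u''))"
    and K1_nonneg: "0 \<le> K1" and rho_nonneg: "0 \<le> \<rho>"
    and g_deriv: "\<And>x y. ((\<lambda>x. g x y) has_derivative blinfun_apply (Dg x y)) (at x)"
    and g_growth: "\<And>x y. norm (g x y) \<le> Kg * (1 + norm x) ^ L1 * (1 + norm y) ^ L2"
    and Dg_growth: "\<And>x y. norm (Dg x y) \<le> Kg * (1 + norm x) ^ L1 * (1 + norm y) ^ L2"
    and Kg_nonneg: "0 \<le> Kg"
    and c_deriv: "\<And>x u. ((\<lambda>x. c x u) has_derivative blinfun_apply (Dc x u)) (at x)"
    and Dc_growth: "\<And>x u. norm u \<le> \<rho> \<Longrightarrow> norm (Dc x u) \<le> Kc * (1 + norm x) ^ L3"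
    and Kc_nonneg: "0 \<le> Kc"
begin

definition f_offset :: real where
  "f_offset = norm (f 0 0) + K1 * \<rho>"

lemma f_offset_nonneg: "0 \<le> f_offset"
  using K1_nonneg rho_nonneg by (simp add: f_offset_def)

lemma f_linear_growth:
  assumes "norm u \<le> \<rho>"
  shows "norm (f z u) \<le> K1 * norm z + f_offset"
proof -
  have "norm (f z u - f 0 0) \<le> K1 * (norm z + norm u)"
    using f_lipschitz[of u 0 z 0] assms rho_nonneg by simp
  also have "\<dots> \<le> K1 * (norm z + \<rho>)"
    using assms K1_nonneg by (simp add: mult_left_mono)
  finally show ?thesis
    using norm_triangle_ineq2[of "f z u" "f 0 0"] by (simp add: f_offset_def algebra_simps)
qed

lemma ode_solution_norm_le:
  assumes sol: "ode_solution f w a b p x" and ab: "b \<le> a + 1"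
    and w: "\<And>s. s \<in> {a..b} \<Longrightarrow> norm (w s) \<le> \<rho>" and t: "t \<in> {a..b}"
  shows "norm (x t) \<le> (norm p + f_offset) * exp K1"
proof -
  have "norm (x t) \<le> (norm (x a) + integral {a..b} (\<lambda>_. f_offset)) * exp (K1 * (t - a))"
    using sol w t K1_nonneg f_offset_nonneg f_linear_growth
    by (intro integral_equation_norm_le[where F = "\<lambda>s. f (x s) (w s)"])
       (auto simp: ode_solution_def)
  also have "\<dots> \<le> (norm p + f_offset) * exp K1"
    using sol t ab K1_nonneg f_offset_nonneg
    by (intro mult_mono add_mono) (auto simp: ode_solution_def mult_left_le_one_le mult_left_le)
  finally show ?thesis .
qed

lemma ode_solution_dist_le:
  assumes sol1: "ode_solution f w1 a b p1 x1" and sol2: "ode_solution f w2 a b p2 x2"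
    and ab: "b \<le> a + 1"
    and w1: "\<And>s. s \<in> {a..b} \<Longrightarrow> norm (w1 s) \<le> \<rho>"
    and w2: "\<And>s. s \<in> {a..b} \<Longrightarrow> norm (w2 s) \<le> \<rho>"
    and h: "\<And>s. s \<in> {a..b} \<Longrightarrow> norm (w1 s - w2 s) \<le> h s"
    and h_int: "h integrable_on {a..b}" and h_nonneg: "\<And>s. s \<in> {a..b} \<Longrightarrow> 0 \<le> h s"
    and t: "t \<in> {a..b}"
  shows "norm (x1 t - x2 t) \<le> (norm (p1 - p2) + K1 * integral {a..b} h) * exp K1"
proof -
  have F_le: "norm (f (x1 s) (w1 s) - f (x2 s) (w2 s)) \<le> K1 * norm (x1 s - x2 s) + K1 * h s"
    if "s \<in> {a..b}" for s
    using f_lipschitz[OF w1 w2, of s s "x1 s" "x2 s"] h[of s] K1_nonneg that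
    by (smt (verit) distrib_left mult_left_mono)
  have F_int: "((\<lambda>s. f (x1 s) (w1 s) - f (x2 s) (w2 s)) has_integral (x1 s - x2 s) - (x1 a - x2 a)) {a..s}"
    if "s \<in> {a..b}" for s
    using has_integral_diff[of "\<lambda>s. f (x1 s) (w1 s)" "x1 s - p1" _ "\<lambda>s. f (x2 s) (w2 s)" "x2 s - p2"]
      sol1 sol2 that
    by (simp add: ode_solution_def algebra_simps)
  have "norm (x1 t - x2 t)
      \<le> (norm (x1 a - x2 a) + integral {a..b} (\<lambda>s. K1 * h s)) * exp (K1 * (t - a))"
    using sol1 sol2 t K1_nonneg h_nonneg F_le h_int F_int
    by (intro integral_equation_norm_le[where F = "\<lambda>s. f (x1 s) (w1 s) - f (x2 s) (w2 s)"])
       (auto simp: ode_solution_def intro: continuous_on_diff integrable_on_mult_right)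
  also have "\<dots> \<le> (norm (p1 - p2) + K1 * integral {a..b} h) * exp K1"
    using sol1 sol2 t ab K1_nonneg h_nonneg integral_nonneg[OF h_int h_nonneg]
    by (intro mult_mono) (auto simp: ode_solution_def mult_left_le)
  finally show ?thesis .
qed

(* Constants are indexed by the number n of jumps: mode Suc n lives on [n, n + 1] and its bounds
   are powers of obs_weight y n. *)
primrec mode_norm_const :: "'x \<Rightarrow> nat \<Rightarrow> real" where
  "mode_norm_const x0 0 = (norm x0 + f_offset) * exp K1"
| "mode_norm_const x0 (Suc n) = (Kg * (1 + mode_norm_const x0 n) ^ L1 + f_offset) * exp K1"

primrec mode_norm_exp :: "nat \<Rightarrow> nat" where
  "mode_norm_exp 0 = 0"
| "mode_norm_exp (Suc n) = mode_norm_exp n * L1 + L2"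

primrec needle_dist_const :: "'x \<Rightarrow> nat \<Rightarrow> real" where
  "needle_dist_const x0 0 = 2 * K1 * \<rho> * exp K1"
| "needle_dist_const x0 (Suc n) = Kg * (1 + mode_norm_const x0 n) ^ L1 * needle_dist_const x0 n * exp K1"

primrec needle_dist_exp :: "nat \<Rightarrow> nat" where
  "needle_dist_exp 0 = 0"
| "needle_dist_exp (Suc n) = mode_norm_exp (Suc n) + needle_dist_exp n"

definition cost_const :: "'x \<Rightarrow> nat \<Rightarrow> real" where
  "cost_const x0 n = Kc * (1 + mode_norm_const x0 n) ^ L3 * needle_dist_const x0 n"

definition cost_exp :: "nat \<Rightarrow> nat" where
  "cost_exp n = mode_norm_exp n * L3 + needle_dist_exp n"

lemma mode_norm_const_nonneg: "0 \<le> mode_norm_const x0 n"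
  by (induction n) (simp_all add: f_offset_nonneg Kg_nonneg)

lemma needle_dist_const_nonneg: "0 \<le> needle_dist_const x0 n"
  by (induction n) (simp_all add: K1_nonneg rho_nonneg Kg_nonneg mode_norm_const_nonneg)

lemma cost_const_nonneg: "0 \<le> cost_const x0 n"
  unfolding cost_const_def using Kc_nonneg mode_norm_const_nonneg[of x0 n] needle_dist_const_nonneg[of x0 n]
  by (intro mult_nonneg_nonneg zero_le_power) auto

lemma jump_growth_le:
  assumes "norm z \<le> C * obs_weight y n ^ E"
  shows "Kg * (1 + norm z) ^ L1 * (1 + norm (y (Suc n))) ^ L2
    \<le> Kg * (1 + C) ^ L1 * obs_weight y (Suc n) ^ (E * L1 + L2)"
  using growth_le_weight_power[OF Kg_nonneg norm_ge_zero assms obs_weight_ge_1 norm_ge_zero]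
  by (simp add: obs_weight_Suc)

lemma mode_norm_le:
  assumes w: "\<And>s. s \<in> {0..real T} \<Longrightarrow> norm (w s) \<le> \<rho>"
    and traj: "hybrid_trajectory f g T w x0 y xs"
    and "Suc n \<le> T" "t \<in> {real n..real (Suc n)}"
  shows "norm (xs (Suc n) t) \<le> mode_norm_const x0 n * obs_weight y n ^ mode_norm_exp n"
  using assms(3,4)
proof (induction n arbitrary: t)
  case 0
  then show ?case
    using ode_solution_norm_le[OF hybrid_trajectory_first_mode[OF traj] _ w] by simp
next
  case (Suc n)
  define W where "W = obs_weight y (Suc n) ^ mode_norm_exp (Suc n)"
  have W: "1 \<le> W" using obs_weight_ge_1 unfolding W_def by (rule one_le_power)
  have "norm (xs (Suc n) (real (Suc n))) \<le> mode_norm_const x0 n * obs_weight y n ^ mode_norm_exp n"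
    using Suc by simp
  then have g_le: "norm (g (xs (Suc n) (real (Suc n))) (y (Suc n)))
      \<le> Kg * (1 + mode_norm_const x0 n) ^ L1 * W"
    using g_growth jump_growth_le order_trans by (fastforce simp: W_def)
  have "norm (xs (Suc (Suc n)) t)
      \<le> (norm (g (xs (Suc n) (real (Suc n))) (y (Suc n))) + f_offset) * exp K1"
    using Suc.prems w by (intro ode_solution_norm_le[OF hybrid_trajectory_next_mode[OF traj]]) auto
  also have "\<dots> \<le> (Kg * (1 + mode_norm_const x0 n) ^ L1 * W + f_offset * W) * exp K1"
    using g_le W f_offset_nonneg mult_left_mono[of 1 W f_offset] by (intro mult_right_mono add_mono) auto
  finally show ?case by (simp add: W_def algebra_simps)
qed

end

locale needle_variation = hybrid_system f \<rho> K1 g Dg Kg L1 L2 c Dc Kc L3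
  for f :: "'x::euclidean_space \<Rightarrow> 'u::real_normed_vector \<Rightarrow> 'x" and \<rho> K1
    and g :: "'x \<Rightarrow> 'y::real_normed_vector \<Rightarrow> 'x" and Dg Kg L1 L2
    and c :: "'x \<Rightarrow> 'u \<Rightarrow> real" and Dc Kc L3 +
  fixes T :: nat and x0 :: 'x and u :: "real \<Rightarrow> 'u" and \<tau> \<epsilon> :: real and v :: 'u
    and y :: "nat \<Rightarrow> 'y" and xs xe :: "nat \<Rightarrow> real \<Rightarrow> 'x"
  assumes u_bounded: "\<And>s. s \<in> {0..real T} \<Longrightarrow> norm (u s) \<le> \<rho>"
    and v_bounded: "norm v \<le> \<rho>"
    and eps: "0 \<le> \<epsilon>" "\<epsilon> \<le> \<tau>" and tau_lt_1: "\<tau> < 1"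
    and nominal: "hybrid_trajectory f g T u x0 y xs"
    and perturbed: "hybrid_trajectory f g T (needle u \<tau> v \<epsilon>) x0 y xe"
begin

lemma needle_bounded: "s \<in> {0..real T} \<Longrightarrow> norm (needle u \<tau> v \<epsilon> s) \<le> \<rho>"
  using u_bounded v_bounded by (simp add: needle_def)

lemma first_mode_dist_le:
  assumes "1 \<le> T" "t \<in> {0..1}"
  shows "norm (xe 1 t - xs 1 t) \<le> \<epsilon> * needle_dist_const x0 0"
proof -
  define h where "h s = (if s \<in> {\<tau> - \<epsilon>..\<tau>} then 2 * \<rho> else 0)" for s
  have window: "{\<tau> - \<epsilon>..\<tau>} \<inter> {0..1} = {\<tau> - \<epsilon>..\<tau>}"
    using eps tau_lt_1 by auto
  have h_int: "h integrable_on {0..1}" and h_integral: "integral {0..1} h = 2 * \<rho> * \<epsilon>"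
    unfolding h_def integrable_restrict_Int integral_restrict_Int window using eps
    by (simp_all add: integrable_const_ivl)
  have bounded: "norm (u s) \<le> \<rho>" "norm (needle u \<tau> v \<epsilon> s) \<le> \<rho>" if "s \<in> {0..1}" for s
    using u_bounded needle_bounded that assms(1) by auto
  have "norm (needle u \<tau> v \<epsilon> s - u s) \<le> h s" if "s \<in> {0..1}" for s
    using norm_triangle_ineq4[of v "u s"] bounded[OF that] v_bounded rho_nonneg
    by (auto simp: needle_def h_def)
  then have "norm (xe 1 t - xs 1 t) \<le> (norm (x0 - x0) + K1 * integral {0..1} h) * exp K1"
    using bounded h_int rho_nonneg assms(2)
    by (intro ode_solution_dist_le[OF hybrid_trajectory_first_mode[OF perturbed]
          hybrid_trajectory_first_mode[OF nominal]]) (auto simp: h_def)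
  then show ?thesis by (simp add: h_integral mult_ac)
qed

lemma mode_dist_le:
  assumes "Suc n \<le> T" "t \<in> {real n..real (Suc n)}"
  shows "norm (xe (Suc n) t - xs (Suc n) t)
    \<le> \<epsilon> * (needle_dist_const x0 n * obs_weight y n ^ needle_dist_exp n)"
  using assms
proof (induction n arbitrary: t)
  case 0
  then show ?case using first_mode_dist_le by simp
next
  case (Suc n)
  define zs ze where "zs = xs (Suc n) (real (Suc n))" and "ze = xe (Suc n) (real (Suc n))"
  define R where "R = mode_norm_const x0 n * obs_weight y n ^ mode_norm_exp n"
  define B where "B = Kg * (1 + mode_norm_const x0 n) ^ L1 * obs_weight y (Suc n) ^ mode_norm_exp (Suc n)"
  have B_nonneg: "0 \<le> B"
    unfolding B_def using Kg_nonneg mode_norm_const_nonneg[of x0 n] obs_weight_ge_1[of y "Suc n"]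
    by (intro mult_nonneg_nonneg zero_le_power) auto
  have z_bounds: "norm zs \<le> R" "norm ze \<le> R"
    using Suc.prems u_bounded needle_bounded
    by (auto simp: zs_def ze_def R_def intro!: mode_norm_le[OF _ nominal] mode_norm_le[OF _ perturbed])
  have "norm (ze - zs) \<le> \<epsilon> * (needle_dist_const x0 n * obs_weight y n ^ needle_dist_exp n)"
    using Suc by (simp add: zs_def ze_def)
  also have "\<dots> \<le> \<epsilon> * (needle_dist_const x0 n * obs_weight y (Suc n) ^ needle_dist_exp n)"
    using eps needle_dist_const_nonneg obs_weight_le_Suc order_trans[OF zero_le_one obs_weight_ge_1]
    by (intro mult_left_mono power_mono) auto
  finally have z_dist:
    "norm (ze - zs) \<le> \<epsilon> * (needle_dist_const x0 n * obs_weight y (Suc n) ^ needle_dist_exp n)" .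
  have Dg_le: "norm (Dg z (y (Suc n))) \<le> B" if "norm z \<le> R" for z
    using Dg_growth jump_growth_le[of z] that order_trans by (fastforce simp: R_def B_def)
  have same_control: "norm (needle u \<tau> v \<epsilon> s - u s) \<le> 0"
    if "s \<in> {real (Suc n)..real (Suc (Suc n))}" for s
    using that tau_lt_1 by (simp add: needle_def)
  have in_horizon: "s \<in> {0..real T}" if "s \<in> {real (Suc n)..real (Suc (Suc n))}" for s
    using that Suc.prems(1) of_nat_le_iff[of "Suc (Suc n)" T] by auto
  have "norm (xe (Suc (Suc n)) t - xs (Suc (Suc n)) t)
      \<le> (norm (g ze (y (Suc n)) - g zs (y (Suc n)))
          + K1 * integral {real (Suc n)..real (Suc (Suc n))} (\<lambda>_. 0)) * exp K1"
    unfolding zs_def ze_def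
    by (rule ode_solution_dist_le[OF hybrid_trajectory_next_mode[OF perturbed Suc.prems(1)]
          hybrid_trajectory_next_mode[OF nominal Suc.prems(1)] _ needle_bounded[OF in_horizon]
          u_bounded[OF in_horizon] same_control _ _ Suc.prems(2)]) auto
  also have "\<dots> \<le> B * norm (ze - zs) * exp K1"
    using norm_diff_le_derivative_bound[OF g_deriv Dg_le z_bounds(2,1)] by simp
  also have "\<dots>
      \<le> B * (\<epsilon> * (needle_dist_const x0 n * obs_weight y (Suc n) ^ needle_dist_exp n)) * exp K1"
    using z_dist B_nonneg by (intro mult_right_mono mult_left_mono) auto
  finally show ?case by (simp add: B_def power_add mult_ac)
qed

lemma needle_cost_le:
  assumes n: "Suc n \<le> T" and t: "t \<in> {real n..real (Suc n)}" and after_needle: "\<tau> < t"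
  shows "\<bar>c (xe (Suc n) t) (needle u \<tau> v \<epsilon> t) - c (xs (Suc n) t) (u t)\<bar>
    \<le> \<epsilon> * (cost_const x0 n * obs_weight y n ^ cost_exp n)"
proof -
  define W where "W = obs_weight y n"
  define R where "R = mode_norm_const x0 n * W ^ mode_norm_exp n"
  define B where "B = Kc * (1 + mode_norm_const x0 n) ^ L3 * W ^ (mode_norm_exp n * L3)"
  have W: "1 \<le> W" using obs_weight_ge_1 by (simp add: W_def)
  have B_nonneg: "0 \<le> B"
    unfolding B_def using Kc_nonneg mode_norm_const_nonneg[of x0 n] W
    by (intro mult_nonneg_nonneg zero_le_power) auto
  have in_horizon: "t \<in> {0..real T}"
    using t n of_nat_le_iff[of "Suc n" T] by auto
  have x_bounds: "norm (xe (Suc n) t) \<le> R" "norm (xs (Suc n) t) \<le> R"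
    using n t u_bounded needle_bounded
    by (auto simp: R_def W_def intro!: mode_norm_le[OF _ perturbed] mode_norm_le[OF _ nominal])
  have Dc_le: "norm (Dc z (u t)) \<le> B" if "norm z \<le> R" for z
  proof -
    have "(1 + norm z) ^ L3 \<le> (1 + mode_norm_const x0 n) ^ L3 * W ^ (mode_norm_exp n * L3)"
      using one_plus_power_le_weight_power[OF norm_ge_zero that[unfolded R_def] W] .
    then show ?thesis
      using Dc_growth[OF u_bounded[OF in_horizon], of z] Kc_nonneg
      by (auto simp: B_def mult.assoc intro: order_trans mult_left_mono)
  qed
  have "\<bar>c (xe (Suc n) t) (u t) - c (xs (Suc n) t) (u t)\<bar> \<le> B * norm (xe (Suc n) t - xs (Suc n) t)"
    using norm_diff_le_derivative_bound[OF c_deriv Dc_le x_bounds] by simp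
  also have "\<dots> \<le> B * (\<epsilon> * (needle_dist_const x0 n * W ^ needle_dist_exp n))"
    using mode_dist_le[OF n t] B_nonneg by (intro mult_left_mono) (auto simp: W_def)
  finally show ?thesis
    using after_needle by (simp add: needle_def B_def W_def cost_const_def cost_exp_def power_add mult_ac)
qed

end

theorem proposition12:
  fixes T L1 L2 L3 :: nat
    and \<rho>max K1 K2 K3 K4 K5 K6 K7 :: real
    and f :: "real^'nx \<Rightarrow> real^'m \<Rightarrow> real^'nx"
    and g :: "real^'nx \<Rightarrow> real^'ny \<Rightarrow> real^'nx"
    and c :: "real^'nx \<Rightarrow> real^'m \<Rightarrow> real"
    and x0 :: "real^'nx" and \<tau> :: real and v :: "real^'m"
  assumes T_pos: "T \<ge> 1"
    and rho_pos: "\<rho>max > 0"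
    and f_C1: "\<exists>Df :: (real^'nx) \<times> (real^'m) \<Rightarrow> ((real^'nx) \<times> (real^'m)) \<Rightarrow>\<^sub>L (real^'nx).
                 (\<forall>p. ((\<lambda>p. f (fst p) (snd p)) has_derivative blinfun_apply (Df p)) (at p))
                 \<and> continuous_on UNIV Df"
    and K1: "K1 \<ge> 1"
    and f_lip: "\<And>x' x'' u' u''. norm u' \<le> \<rho>max \<Longrightarrow> norm u'' \<le> \<rho>max \<Longrightarrow>
                 norm (f x' u' - f x'' u'') \<le> K1 * (norm (x' - x'') + norm (u' - u''))"
    and g_cont: "continuous_on UNIV (\<lambda>p. g (fst p) (snd p))"
    and Dg: "\<And>x y. ((\<lambda>x. g x y) has_derivative blinfun_apply (Dg x y)) (at x)"
    and K2_5: "K2 \<ge> 0" "K3 \<ge> 0" "K4 \<ge> 0" "K5 \<ge> 0"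
    and L12: "L1 \<ge> 1" "L2 \<ge> 1"
    and g_bound: "\<And>x y. norm (g x y) \<le> K2 + K3 * norm x ^ L1 + K4 * norm y ^ L2
                          + K5 * norm x ^ L1 * norm y ^ L2"
    and Dg_bound: "\<And>x y. norm (Dg x y) \<le> K2 + K3 * norm x ^ L1 + K4 * norm y ^ L2
                          + K5 * norm x ^ L1 * norm y ^ L2"
    and c_cont: "continuous_on UNIV (\<lambda>p. c (fst p) (snd p))"
    and Dc: "\<And>x u. ((\<lambda>x. c x u) has_derivative blinfun_apply (Dc x u)) (at x)"
    and Dc_cont: "\<And>u. continuous_on UNIV (\<lambda>x. Dc x u)"
    and K67: "K6 \<ge> 0" "K7 \<ge> 0"
    and L3: "L3 \<ge> 1"
    and c_bound: "\<And>x u. norm u \<le> \<rho>max \<Longrightarrow> \<bar>c x u\<bar> \<le> K6 + K7 * norm x ^ L3"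
    and Dc_bound: "\<And>x u. norm u \<le> \<rho>max \<Longrightarrow> norm (Dc x u) \<le> K6 + K7 * norm x ^ L3"
    and tau: "0 < \<tau>" "\<tau> < 1"
    and v: "norm v \<le> \<rho>max"
  shows "\<exists>\<beta>1 :: real. \<exists>\<L> :: nat \<Rightarrow> nat list set. \<exists>\<beta> :: nat \<Rightarrow> nat list \<Rightarrow> real.
    0 < \<beta>1 \<and>
    (\<forall>i\<in>{2..T}. finite (\<L> i) \<and> (\<forall>js\<in>\<L> i. length js = i - 1 \<and> 0 < \<beta> i js)) \<and>
    (\<forall>u \<in> admissible_controls (real T) \<rho>max. continuous (at_left \<tau>) u \<longrightarrow>
      (\<forall>(y :: nat \<Rightarrow> real^'ny) (\<epsilon>::real) xs xe.
         0 \<le> \<epsilon> \<longrightarrow> \<epsilon> \<le> \<tau> \<longrightarrow>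
         hybrid_trajectory f g T u x0 y xs \<longrightarrow>
         hybrid_trajectory f g T (needle u \<tau> v \<epsilon>) x0 y xe \<longrightarrow>
         (\<forall>t\<in>{\<tau><..1}. \<bar>c (xe 1 t) (needle u \<tau> v \<epsilon> t) - c (xs 1 t) (u t)\<bar> \<le> \<epsilon> * \<beta>1) \<and>
         (\<forall>i\<in>{2..T}. \<forall>t\<in>{real i - 1..real i}.
            \<bar>c (xe i t) (needle u \<tau> v \<epsilon> t) - c (xs i t) (u t)\<bar>
              \<le> \<epsilon> * (\<Sum>js\<in>\<L> i. \<beta> i js * (\<Prod>m<i - 1. norm (y (m + 1)) ^ (js ! m))))))"
proof -
  define Kg where "Kg = K2 + K3 + K4 + K5"
  have g_growth: "K2 + K3 * norm x ^ L1 + K4 * norm z ^ L2 + K5 * norm x ^ L1 * norm z ^ L2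
      \<le> Kg * (1 + norm x) ^ L1 * (1 + norm z) ^ L2" for x :: "real^'nx" and z :: "real^'ny"
    unfolding Kg_def using K2_5 by (intro polynomial_le_one_plus_powers) auto
  have c_growth: "K6 + K7 * norm x ^ L3 \<le> (K6 + K7) * (1 + norm x) ^ L3" for x :: "real^'nx"
    using polynomial_le_one_plus_powers[of K6 K7 0 0 "norm x" 0 L3 0] K67 by simp
  interpret hybrid_system f \<rho>max K1 g Dg Kg L1 L2 c Dc "K6 + K7" L3
    using f_lip K1 rho_pos Dg Dc K2_5 K67 order_trans[OF g_bound g_growth]
      order_trans[OF Dg_bound g_growth] order_trans[OF Dc_bound c_growth]
    by unfold_locales (auto simp: Kg_def)
  define \<beta> where "\<beta> n = cost_const x0 n + 1" for n
  have \<beta>_pos: "0 < \<beta> n" for n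
    using cost_const_nonneg[of x0 n] by (simp add: \<beta>_def)
  have bound: "\<bar>c (xe (Suc n) t) (needle u \<tau> v \<epsilon> t) - c (xs (Suc n) t) (u t)\<bar>
      \<le> \<epsilon> * (\<beta> n * obs_weight y n ^ cost_exp n)"
    if "u \<in> admissible_controls (real T) \<rho>max" "0 \<le> \<epsilon>" "\<epsilon> \<le> \<tau>"
      "hybrid_trajectory f g T u x0 y xs" "hybrid_trajectory f g T (needle u \<tau> v \<epsilon>) x0 y xe"
      "Suc n \<le> T" "t \<in> {real n..real (Suc n)}" "\<tau> < t"
    for u \<epsilon> y xs xe n t
  proof -
    interpret needle_variation f \<rho>max K1 g Dg Kg L1 L2 c Dc "K6 + K7" L3 T x0 u \<tau> \<epsilon> v y xs xe
      using that(1-5) v tau by unfold_locales (auto simp: admissible_controls_def)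
    have "0 \<le> \<epsilon> * obs_weight y n ^ cost_exp n"
      using that(2) obs_weight_ge_1[of y n] by simp
    then show ?thesis
      using needle_cost_le[OF that(6-8)] by (simp add: \<beta>_def algebra_simps)
  qed
  show ?thesis
  proof (intro exI[of _ "\<beta> 0"] exI[of _ "\<lambda>i. exponent_lists (i - 1) (cost_exp (i - 1))"]
      exI[of _ "\<lambda>i js. \<beta> (i - 1) * (\<Prod>m<i - 1. of_nat (cost_exp (i - 1) choose js ! m))"]
      conjI ballI allI impI)
    fix i js assume js: "js \<in> exponent_lists (i - 1) (cost_exp (i - 1))"
    then show "length js = i - 1" by (simp add: exponent_lists_def)
    show "0 < \<beta> (i - 1) * (\<Prod>m<i - 1. of_nat (cost_exp (i - 1) choose js ! m))"
      using \<beta>_pos prod_binomial_exponent_lists_pos[OF js] by (rule mult_pos_pos)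
  next
    fix u y \<epsilon> xs xe t
    assume "u \<in> admissible_controls (real T) \<rho>max" "continuous (at_left \<tau>) u" "0 \<le> \<epsilon>"
      "\<epsilon> \<le> \<tau>" "hybrid_trajectory f g T u x0 y xs"
      "hybrid_trajectory f g T (needle u \<tau> v \<epsilon>) x0 y xe"
      "t \<in> {\<tau><..1}"
    then show "\<bar>c (xe 1 t) (needle u \<tau> v \<epsilon> t) - c (xs 1 t) (u t)\<bar> \<le> \<epsilon> * \<beta> 0"
      using bound[of u \<epsilon> y xs xe 0 t] T_pos tau by simp
  next
    fix u y \<epsilon> xs xe i t
    assume data: "u \<in> admissible_controls (real T) \<rho>max" "continuous (at_left \<tau>) u" "0 \<le> \<epsilon>"
      "\<epsilon> \<le> \<tau>" "hybrid_trajectory f g T u x0 y xs"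
      "hybrid_trajectory f g T (needle u \<tau> v \<epsilon>) x0 y xe"
      and i: "i \<in> {2..T}" and "t \<in> {real i - 1..real i}"
    then have "Suc (i - 1) \<le> T" "t \<in> {real (i - 1)..real (Suc (i - 1))}" "\<tau> < t"
      using tau by (auto simp: of_nat_diff)
    from bound[OF data(1,3-6) this] i
    show "\<bar>c (xe i t) (needle u \<tau> v \<epsilon> t) - c (xs i t) (u t)\<bar>
        \<le> \<epsilon> * (\<Sum>js\<in>exponent_lists (i - 1) (cost_exp (i - 1)). \<beta> (i - 1)
          * (\<Prod>m<i - 1. of_nat (cost_exp (i - 1) choose js ! m))
          * (\<Prod>m<i - 1. norm (y (m + 1)) ^ (js ! m)))"
      by (simp add: obs_weight_power_eq_sum_exponent_lists sum_distrib_left mult.assoc)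
  qed (use \<beta>_pos finite_exponent_lists in auto)
qed

end
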